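(* Let $G$ be a group, let $a,b\in G$, and let $K$ be a finite-index normal subgroup of $G$. Let $m=\deg_K(a)$ and $n=\deg_K(b)$. Suppose there exists a retraction $\rho:K\to\langle a^m\rangle$ (that is, a homomorphism $\rho:K\to\langle a^m\rangle$ restricting to the identity on $\langle a^m\rangle$) with the property that \[ \rho\big((b^{mn})^g\big)\neq a^{mn} \] for all $g\in G$. Then there exists a homomorphism $\tau$ from $G$ to a finite group such that $\tau(a)$ is not conjugate to $\tau(b)$.
   Context: For a finite-index subgroup $K$ of $G$ and $g\in G$, the degree $\deg_K(g)$ is the minimal positive integer $n$ such that $g^n\in K$. For group elements $g,h$, the notation $g^h$ means $h^{-1}gh$. *)

theory Defs
  imports "HOL-Algebra.Algebra"
begin

definition deg_in :: "('a, 'b) monoid_scheme \<Rightarrow> 'a set \<Rightarrow> 'a \<Rightarrow> nat" where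
  "deg_in G K g = (LEAST n::nat. 0 < n \<and> g [^]\<^bsub>G\<^esub> n \<in> K)"

end

theory Submission
  imports Defs
begin

text \<open>Write x = b^(mn) and e = a^(mn); it suffices to find a finite quotient in which e is not
conjugate to x. Every conjugate x^g lies in K, and since the cyclic group <a^m> is abelian,
rho(x^g) depends only on the coset Kg. Hence the elements rho(x^g) e^-1 form a finite subset of
<a^m> not containing 1, and some power subgroup <a^(mN)> misses all of them. Its preimage L
under rho has finite index in G and contains no element x^g e^-1, and the quotient of G by the
normal core of L, a finite group, separates the conjugacy classes of e and x.\<close>

lemma finite_image_if_fibres_refine:
  assumes "finite (F ` A)"
    and "\<And>x y. x \<in> A \<Longrightarrow> y \<in> A \<Longrightarrow> F x = F y \<Longrightarrow> E x = E y"
  shows "finite (E ` A)"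
proof -
  define s where "s p = (SOME x. x \<in> A \<and> F x = p)" for p
  have "E x = E (s (F x))" if "x \<in> A" for x
  proof -
    have "s (F x) \<in> A \<and> F (s (F x)) = F x"
      unfolding s_def by (rule someI_ex) (use that in blast)
    then show ?thesis using assms(2) that by metis
  qed
  then have "E ` A \<subseteq> (E \<circ> s) ` F ` A" by (auto simp: image_image)
  then show ?thesis using assms(1) finite_subset by blast
qed

definition normal_core :: "('a, 'b) monoid_scheme \<Rightarrow> 'a set \<Rightarrow> 'a set"
  where "normal_core G L = {g \<in> carrier G. \<forall>h \<in> carrier G. inv\<^bsub>G\<^esub> h \<otimes>\<^bsub>G\<^esub> g \<otimes>\<^bsub>G\<^esub> h \<in> L}"

context group
begin

lemma rcos_eq_iff:
  assumes "subgroup H G" "x \<in> carrier G" "y \<in> carrier G"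
  shows "H #> x = H #> y \<longleftrightarrow> x \<otimes> inv y \<in> H"
proof
  assume "H #> x = H #> y"
  then have "x \<in> H #> y" using rcos_self[OF assms(2,1)] by simp
  then show "x \<otimes> inv y \<in> H" using subgroup.rcos_module_imp[OF assms(1) is_group assms(3)] by blast
next
  assume "x \<otimes> inv y \<in> H"
  then have "x \<in> H #> y" using subgroup.rcos_module_rev[OF assms(1) is_group assms(3,2)] by blast
  then show "H #> x = H #> y" using repr_independence[OF _ assms(3,1)] by simp
qed

lemma finite_rcosets_iff: "finite (rcosets H) \<longleftrightarrow> finite ((\<lambda>g. H #> g) ` carrier G)"
  unfolding RCOSETS_def by (simp add: UNION_singleton_eq_range)

lemma finite_rcosets_if_separating:
  assumes "subgroup H G" and "finite (F ` carrier G)"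
    and "\<And>x y. x \<in> carrier G \<Longrightarrow> y \<in> carrier G \<Longrightarrow> F x = F y \<Longrightarrow> x \<otimes> inv y \<in> H"
  shows "finite (rcosets H)"
  unfolding finite_rcosets_iff using assms(2)
proof (rule finite_image_if_fibres_refine)
  fix x y assume "x \<in> carrier G" "y \<in> carrier G" "F x = F y"
  then show "H #> x = H #> y" using assms(3) rcos_eq_iff[OF assms(1)] by simp
qed

lemma inv_m_cancel_left [simp]: "x \<in> carrier G \<Longrightarrow> y \<in> carrier G \<Longrightarrow> inv x \<otimes> (x \<otimes> y) = y"
  and m_inv_cancel_left [simp]: "x \<in> carrier G \<Longrightarrow> y \<in> carrier G \<Longrightarrow> x \<otimes> (inv x \<otimes> y) = y"
  by (simp_all add: m_assoc[symmetric])

lemma conj_mult: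
  assumes "g \<in> carrier G" "x \<in> carrier G" "y \<in> carrier G"
  shows "inv g \<otimes> (x \<otimes> y) \<otimes> g = (inv g \<otimes> x \<otimes> g) \<otimes> (inv g \<otimes> y \<otimes> g)"
  using assms by (simp add: m_assoc)

lemma conj_inv:
  assumes "g \<in> carrier G" "x \<in> carrier G"
  shows "inv g \<otimes> inv x \<otimes> g = inv (inv g \<otimes> x \<otimes> g)"
  using assms by (simp add: inv_mult_group m_assoc)

lemma conj_conj:
  assumes "g \<in> carrier G" "h \<in> carrier G" "x \<in> carrier G"
  shows "inv h \<otimes> (inv g \<otimes> x \<otimes> g) \<otimes> h = inv (g \<otimes> h) \<otimes> x \<otimes> (g \<otimes> h)"
  using assms by (simp add: inv_mult_group m_assoc)

lemma conj_nat_pow: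
  assumes "g \<in> carrier G" "x \<in> carrier G"
  shows "(inv g \<otimes> x \<otimes> g) [^] (k::nat) = inv g \<otimes> x [^] k \<otimes> g"
  by (induction k) (use assms in \<open>simp_all add: conj_mult\<close>)

lemma normal_core_subset: "normal_core G L \<subseteq> L"
proof
  fix g assume "g \<in> normal_core G L"
  then have "inv \<one> \<otimes> g \<otimes> \<one> \<in> L" "g \<in> carrier G" unfolding normal_core_def by auto
  then show "g \<in> L" by simp
qed

lemma normal_core_normal:
  assumes "subgroup L G"
  shows "normal_core G L \<lhd> G"
proof (rule normal_invI)
  interpret L: subgroup L G by fact
  show "subgroup (normal_core G L) G"
  proof (rule subgroupI)
    show "normal_core G L \<subseteq> carrier G" "normal_core G L \<noteq> {}"
      unfolding normal_core_def by auto
  next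
    fix x y assume "x \<in> normal_core G L" "y \<in> normal_core G L"
    then show "inv x \<in> normal_core G L" "x \<otimes> y \<in> normal_core G L"
      unfolding normal_core_def by (auto simp: conj_inv conj_mult)
  qed
next
  fix x h assume "x \<in> carrier G" "h \<in> normal_core G L"
  then show "x \<otimes> h \<otimes> inv x \<in> normal_core G L"
    unfolding normal_core_def using conj_conj[of "inv x"] by auto
qed

lemma finite_rcosets_normal_core:
  assumes "subgroup L G" "finite (rcosets L)"
  shows "finite (rcosets (normal_core G L))"
proof (rule finite_rcosets_if_separating[where F = "\<lambda>g. \<lambda>R \<in> rcosets L. R #> g"])
  interpret L: subgroup L G by fact
  show "subgroup (normal_core G L) G"
    using normal_core_normal[OF assms(1)] by (rule normal_imp_subgroup)
  have "R #> g \<in> rcosets L" if "R \<in> rcosets L" "g \<in> carrier G" for R g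
  proof -
    obtain x where "x \<in> carrier G" "R = L #> x" using \<open>R \<in> rcosets L\<close> unfolding RCOSETS_def by blast
    then show ?thesis using that(2) by (simp add: coset_mult_assoc L.subset rcosetsI)
  qed
  then have "(\<lambda>g. \<lambda>R \<in> rcosets L. R #> g) ` carrier G \<subseteq> rcosets L \<rightarrow>\<^sub>E rcosets L"
    by auto
  then show "finite ((\<lambda>g. \<lambda>R \<in> rcosets L. R #> g) ` carrier G)"
    using assms(2) by (meson finite_PiE finite_subset)
next
  fix x y assume x: "x \<in> carrier G" and y: "y \<in> carrier G"
    and eq: "(\<lambda>R \<in> rcosets L. R #> x) = (\<lambda>R \<in> rcosets L. R #> y)"
  have "inv h \<otimes> (x \<otimes> inv y) \<otimes> h \<in> L" if h: "h \<in> carrier G" for h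
  proof -
    have "(L #> inv h) #> x = (L #> inv h) #> y"
      using fun_cong[OF eq, of "L #> inv h"] h by (simp add: rcosetsI subgroup.subset[OF assms(1)])
    then have "L #> (inv h \<otimes> x) = L #> (inv h \<otimes> y)"
      using h x y by (simp add: coset_mult_assoc subgroup.subset[OF assms(1)])
    then have "(inv h \<otimes> x) \<otimes> inv (inv h \<otimes> y) \<in> L"
      using h x y by (simp add: rcos_eq_iff[OF assms(1)])
    then show ?thesis
      using h x y by (simp add: inv_mult_group m_assoc)
  qed
  then show "x \<otimes> inv y \<in> normal_core G L"
    using x y unfolding normal_core_def by simp
qed

lemma finite_quotient_separating_conj:
  assumes L: "subgroup L G" "finite (rcosets L)"
    and y: "y \<in> carrier G" and z: "z \<in> carrier G"
    and avoid: "\<forall>g \<in> carrier G. (inv g \<otimes> y \<otimes> g) \<otimes> inv z \<notin> L"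
  shows "\<exists>(H :: 'a set monoid) \<tau>. group H \<and> finite (carrier H) \<and> \<tau> \<in> hom G H \<and>
           \<not> (\<exists>h \<in> carrier H. inv\<^bsub>H\<^esub> h \<otimes>\<^bsub>H\<^esub> \<tau> z \<otimes>\<^bsub>H\<^esub> h = \<tau> y)"
proof -
  define M where "M = normal_core G L"
  interpret M: normal M G
    unfolding M_def using L(1) by (rule normal_core_normal)
  interpret \<tau>: group_hom G "G Mod M" "\<lambda>g. M #> g"
    by (simp add: group_hom_def group_hom_axioms_def group_axioms M.factorgroup_is_group
        M.r_coset_hom_Mod)
  have "finite (carrier (G Mod M))"
    unfolding M_def using finite_rcosets_normal_core[OF L] by (simp add: FactGroup_def)
  moreover have "inv\<^bsub>G Mod M\<^esub> h \<otimes>\<^bsub>G Mod M\<^esub> (M #> z) \<otimes>\<^bsub>G Mod M\<^esub> h \<noteq> M #> y"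
    if "h \<in> carrier (G Mod M)" for h
  proof
    obtain g where g: "g \<in> carrier G" "h = M #> g"
      using \<open>h \<in> carrier (G Mod M)\<close> unfolding carrier_FactGroup by blast
    have conj: "inv g \<otimes> z \<otimes> g \<in> carrier G" using g z by simp
    assume "inv\<^bsub>G Mod M\<^esub> h \<otimes>\<^bsub>G Mod M\<^esub> (M #> z) \<otimes>\<^bsub>G Mod M\<^esub> h = M #> y"
    then have "M #> y = M #> (inv g \<otimes> z \<otimes> g)"
      using g z by simp
    then have "y \<otimes> inv (inv g \<otimes> z \<otimes> g) \<in> M"
      using rcos_eq_iff[OF M.subgroup_axioms y conj] by blast
    then have "g \<otimes> (y \<otimes> inv (inv g \<otimes> z \<otimes> g)) \<otimes> inv g \<in> M"
      using g by (simp add: M.inv_op_closed2)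
    also have "g \<otimes> (y \<otimes> inv (inv g \<otimes> z \<otimes> g)) \<otimes> inv g = (g \<otimes> y \<otimes> inv g) \<otimes> inv z"
      using g y z by (simp add: inv_mult_group m_assoc)
    finally show False
      using avoid[rule_format, of "inv g"] g normal_core_subset unfolding M_def by auto
  qed
  ultimately show ?thesis
    using M.factorgroup_is_group M.r_coset_hom_Mod by blast
qed

lemma exists_pow_mem_finite_index_normal:
  assumes "K \<lhd> G" "finite (rcosets K)" "a \<in> carrier G"
  shows "\<exists>n::nat > 0. a [^] n \<in> K"
proof -
  interpret K: normal K G by fact
  interpret Q: group "G Mod K" by (rule K.factorgroup_is_group)
  have fin: "finite (carrier (G Mod K))" using assms(2) by (simp add: FactGroup_def)
  have aQ: "K #> a \<in> carrier (G Mod K)" using assms(3) by (simp add: carrier_FactGroup)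
  define k where "k = Q.ord (K #> a)"
  have "K #> (a [^] k) = (K #> a) [^]\<^bsub>G Mod K\<^esub> k"
    using group_hom.hom_nat_pow[of G "G Mod K"] assms(3) K.r_coset_hom_Mod
    by (simp add: group_hom_def group_hom_axioms_def group_axioms K.factorgroup_is_group)
  also have "\<dots> = K" unfolding k_def using aQ by simp
  finally have "a [^] k \<in> K" using coset_join1 assms(3) K.subgroup_axioms by blast
  moreover have "0 < k" unfolding k_def using Q.ord_ge_1[OF fin aQ] by simp
  ultimately show ?thesis by blast
qed

lemma pow_deg_in_mem:
  assumes "K \<lhd> G" "finite (rcosets K)" "a \<in> carrier G"
  shows "a [^] deg_in G K a \<in> K"
  using LeastI_ex[OF exists_pow_mem_finite_index_normal[OF assms]] unfolding deg_in_def by auto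

lemma subgroup_nat_pow_closed:
  assumes "subgroup H G" "h \<in> H"
  shows "h [^] (k::nat) \<in> H"
  using subgroup_int_pow_closed[OF assms, of "int k"] by (simp add: int_pow_int)

lemma hom_subgroupsD:
  assumes "subgroup K G" "subgroup C G" "\<rho> \<in> hom (G\<lparr>carrier := K\<rparr>) (G\<lparr>carrier := C\<rparr>)"
  shows "\<And>x. x \<in> K \<Longrightarrow> \<rho> x \<in> C"
    and "\<And>x y. x \<in> K \<Longrightarrow> y \<in> K \<Longrightarrow> \<rho> (x \<otimes> y) = \<rho> x \<otimes> \<rho> y"
    and "\<And>x. x \<in> K \<Longrightarrow> \<rho> (inv x) = inv (\<rho> x)"
    and "\<rho> \<one> = \<one>"
proof -
  interpret \<rho>: group_hom "G\<lparr>carrier := K\<rparr>" "G\<lparr>carrier := C\<rparr>" \<rho>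
    using assms by (simp add: group_hom_def group_hom_axioms_def subgroup_imp_group)
  show "\<And>x. x \<in> K \<Longrightarrow> \<rho> x \<in> C"
    using \<rho>.hom_closed by simp
  show "\<And>x y. x \<in> K \<Longrightarrow> y \<in> K \<Longrightarrow> \<rho> (x \<otimes> y) = \<rho> x \<otimes> \<rho> y"
    using \<rho>.hom_mult by simp
  show "\<And>x. x \<in> K \<Longrightarrow> \<rho> (inv x) = inv (\<rho> x)"
    using \<rho>.hom_inv \<rho>.hom_closed assms(1,2) by (simp add: m_inv_consistent)
  show "\<rho> \<one> = \<one>"
    using \<rho>.hom_one by simp
qed

lemma generate_singleton_comm:
  assumes c: "c \<in> carrier G" and "u \<in> generate G {c}" "w \<in> generate G {c}"
  shows "u \<otimes> w = w \<otimes> u"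
proof -
  obtain i j :: int where "u = c [^] i" "w = c [^] j"
    using assms generate_pow[OF c] by blast
  then show ?thesis using c by (simp flip: int_pow_mult add: add.commute)
qed

lemma hom_to_cyclic_conj_eq:
  assumes K: "subgroup K G" and c: "c \<in> carrier G"
    and \<rho>: "\<rho> \<in> hom (G\<lparr>carrier := K\<rparr>) (G\<lparr>carrier := generate G {c}\<rparr>)"
    and k: "k \<in> K" and y: "y \<in> K"
  shows "\<rho> (inv k \<otimes> y \<otimes> k) = \<rho> y"
proof -
  interpret K: subgroup K G by fact
  have C: "subgroup (generate G {c}) G" using c by (simp add: generate_is_subgroup)
  note \<rho>_props = hom_subgroupsD[OF K C \<rho>]
  have in_C: "\<rho> k \<in> generate G {c}" "\<rho> y \<in> generate G {c}"
    using \<rho>_props(1) k y by auto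
  then have carr: "\<rho> k \<in> carrier G" "\<rho> y \<in> carrier G"
    using subgroup.mem_carrier[OF C] by auto
  have "\<rho> (inv k \<otimes> y \<otimes> k) = inv (\<rho> k) \<otimes> \<rho> y \<otimes> \<rho> k"
    using \<rho>_props k y by simp
  also have "\<dots> = inv (\<rho> k) \<otimes> (\<rho> k \<otimes> \<rho> y)"
    using generate_singleton_comm[OF c in_C] carr by (simp add: m_assoc)
  also have "\<dots> = \<rho> y"
    using carr by simp
  finally show ?thesis .
qed

lemma finite_image_conj_hom_to_cyclic:
  assumes K: "K \<lhd> G" "finite (rcosets K)" and c: "c \<in> carrier G"
    and \<rho>: "\<rho> \<in> hom (G\<lparr>carrier := K\<rparr>) (G\<lparr>carrier := generate G {c}\<rparr>)"
    and x: "x \<in> K"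
  shows "finite ((\<lambda>g. \<rho> (inv g \<otimes> x \<otimes> g)) ` carrier G)"
  using K(2) unfolding finite_rcosets_iff
proof (rule finite_image_if_fibres_refine)
  interpret K: normal K G by fact
  fix g1 g2 assume g: "g1 \<in> carrier G" "g2 \<in> carrier G" and "K #> g1 = K #> g2"
  then have "g1 \<otimes> inv g2 \<in> K" by (simp add: rcos_eq_iff[OF K.subgroup_axioms])
  then have "inv g2 \<otimes> (g1 \<otimes> inv g2) \<otimes> g2 \<in> K" using g by (simp add: K.inv_op_closed1)
  then have k: "inv g2 \<otimes> g1 \<in> K" using g by (simp add: m_assoc)
  have "inv g1 \<otimes> x \<otimes> g1 = inv (inv g2 \<otimes> g1) \<otimes> (inv g2 \<otimes> x \<otimes> g2) \<otimes> (inv g2 \<otimes> g1)"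
    using g x conj_conj[of g2 "inv g2 \<otimes> g1" x] by (simp add: m_assoc[symmetric])
  then show "\<rho> (inv g1 \<otimes> x \<otimes> g1) = \<rho> (inv g2 \<otimes> x \<otimes> g2)"
    using hom_to_cyclic_conj_eq[OF K.subgroup_axioms c \<rho> k] g x by (simp add: K.inv_op_closed1)
qed

lemma subgroup_hom_vimage:
  assumes "subgroup K G" "subgroup C G" "\<rho> \<in> hom (G\<lparr>carrier := K\<rparr>) (G\<lparr>carrier := C\<rparr>)"
    and D: "subgroup D G"
  shows "subgroup {k \<in> K. \<rho> k \<in> D} G"
proof (rule subgroupI)
  interpret K: subgroup K G by fact
  interpret D: subgroup D G by fact
  note \<rho>_props = hom_subgroupsD[OF assms(1-3)]
  show "{k \<in> K. \<rho> k \<in> D} \<subseteq> carrier G" by auto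
  have "\<one> \<in> {k \<in> K. \<rho> k \<in> D}" using \<rho>_props(4) by simp
  then show "{k \<in> K. \<rho> k \<in> D} \<noteq> {}" by blast
  fix x y assume "x \<in> {k \<in> K. \<rho> k \<in> D}" "y \<in> {k \<in> K. \<rho> k \<in> D}"
  then show "inv x \<in> {k \<in> K. \<rho> k \<in> D}" "x \<otimes> y \<in> {k \<in> K. \<rho> k \<in> D}"
    using \<rho>_props(2,3) by auto
qed

lemma finite_rcosets_hom_vimage:
  assumes K: "subgroup K G" "finite (rcosets K)" and C: "subgroup C G"
    and \<rho>: "\<rho> \<in> hom (G\<lparr>carrier := K\<rparr>) (G\<lparr>carrier := C\<rparr>)"
    and D: "subgroup D G" "finite ((\<lambda>z. D #> z) ` C)"
  shows "finite (rcosets {k \<in> K. \<rho> k \<in> D})"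
proof -
  interpret K: subgroup K G by fact
  interpret C: subgroup C G by fact
  note \<rho>_props = hom_subgroupsD[OF K(1) C \<rho>]
  define r where "r g = (SOME h. h \<in> K #> g)" for g
  have r: "r g \<in> carrier G \<and> g \<otimes> inv (r g) \<in> K" if g: "g \<in> carrier G" for g
  proof -
    have "r g \<in> K #> g" unfolding r_def using rcos_self[OF g K(1)] by (rule someI)
    then have "r g \<in> carrier G" "r g \<otimes> inv g \<in> K"
      using K.elemrcos_carrier K.rcos_module_imp g is_group by blast+
    then show ?thesis using g K.m_inv_closed by (metis inv_mult_group inv_inv inv_closed)
  qed
  show ?thesis
  proof (rule finite_rcosets_if_separating[where F = "\<lambda>g. (K #> g, D #> \<rho> (g \<otimes> inv (r g)))"])
    show "subgroup {k \<in> K. \<rho> k \<in> D} G" using subgroup_hom_vimage[OF K(1) C \<rho> D(1)] .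
    have "(\<lambda>g. (K #> g, D #> \<rho> (g \<otimes> inv (r g)))) ` carrier G \<subseteq> (rcosets K) \<times> ((\<lambda>z. D #> z) ` C)"
      using r \<rho>_props(1) by (auto intro: rcosetsI)
    then show "finite ((\<lambda>g. (K #> g, D #> \<rho> (g \<otimes> inv (r g)))) ` carrier G)"
      using K(2) D(2) by (meson finite_SigmaI finite_subset)
  next
    fix x y assume x: "x \<in> carrier G" and y: "y \<in> carrier G"
      and "(K #> x, D #> \<rho> (x \<otimes> inv (r x))) = (K #> y, D #> \<rho> (y \<otimes> inv (r y)))"
    then have Kxy: "K #> x = K #> y" and Dxy: "D #> \<rho> (x \<otimes> inv (r y)) = D #> \<rho> (y \<otimes> inv (r y))"
      unfolding r_def by auto
    have s: "r y \<in> carrier G" "x \<otimes> inv (r y) \<in> K" "y \<otimes> inv (r y) \<in> K"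
      using r[OF x] r[OF y] Kxy unfolding r_def by auto
    have "\<rho> (x \<otimes> inv (r y)) \<in> carrier G" "\<rho> (y \<otimes> inv (r y)) \<in> carrier G"
      using \<rho>_props(1) s C.mem_carrier by auto
    then have "\<rho> (x \<otimes> inv (r y)) \<otimes> inv (\<rho> (y \<otimes> inv (r y))) \<in> D"
      using Dxy rcos_eq_iff[OF D(1)] by blast
    also have "\<rho> (x \<otimes> inv (r y)) \<otimes> inv (\<rho> (y \<otimes> inv (r y)))
        = \<rho> ((x \<otimes> inv (r y)) \<otimes> inv (y \<otimes> inv (r y)))"
      using \<rho>_props(2,3) s by simp
    also have "(x \<otimes> inv (r y)) \<otimes> inv (y \<otimes> inv (r y)) = x \<otimes> inv y"
      using s x y by (simp add: inv_mult_group m_assoc)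
    finally show "x \<otimes> inv y \<in> {k \<in> K. \<rho> k \<in> D}"
      using Kxy rcos_eq_iff[OF K(1) x y] by simp
  qed
qed

lemma finite_rcosets_power_in_cyclic:
  assumes c: "c \<in> carrier G" and N: "0 < N"
  shows "finite ((\<lambda>z. generate G {c [^] (N::nat)} #> z) ` generate G {c})"
proof -
  let ?D = "generate G {c [^] N}"
  have D: "subgroup ?D G" using c by (simp add: generate_is_subgroup)
  have "?D #> z \<in> (\<lambda>i. ?D #> c [^] i) ` {..<N}" if "z \<in> generate G {c}" for z
  proof -
    obtain k :: int where z: "z = c [^] k"
      using \<open>z \<in> generate G {c}\<close> generate_pow[OF c] by blast
    define q r where "q = k div int N" and "r = nat (k mod int N)"
    have "c [^] k = c [^] (int N * q) \<otimes> c [^] (int r)"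
      unfolding q_def r_def using c N by (simp flip: int_pow_mult)
    also have "c [^] (int N * q) = (c [^] N) [^] q"
      using c by (simp add: int_pow_int[symmetric] int_pow_pow)
    finally have "z = (c [^] N) [^] q \<otimes> c [^] r"
      using z by (simp add: int_pow_int)
    moreover have "(c [^] N) [^] q \<in> ?D" using generate_pow[of "c [^] N"] c by auto
    ultimately have "?D #> z = ?D #> c [^] r"
      using c D by (simp add: coset_mult_assoc[symmetric] coset_join2 subgroup.subset)
    moreover have "r < N" unfolding r_def using N by (simp add: nat_less_iff)
    ultimately show ?thesis by blast
  qed
  then show ?thesis by (meson finite_imageI finite_lessThan finite_subset image_subsetI)
qed

lemma exists_power_subgroup_avoiding:
  assumes c: "c \<in> carrier G" and D: "finite D" "D \<subseteq> generate G {c}" "\<one> \<notin> D"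
  shows "\<exists>N::nat. 0 < N \<and> (\<forall>d \<in> D. d \<notin> generate G {c [^] N})"
proof (cases "ord c = 0")
  case False
  have "generate G {c [^] ord c} = {\<one>}"
    using generate_pow[of "\<one>"] c by simp
  then show ?thesis using False D(3) by (intro exI[of _ "ord c"]) auto
next
  case True
  \<comment> \<open>exponents of c are now unique, and N is chosen larger than all exponents occurring in D\<close>
  have "\<forall>d \<in> D. \<exists>k::int. d = c [^] k" using D(2) generate_pow[OF c] by blast
  then obtain e :: "'a \<Rightarrow> int" where e: "\<And>d. d \<in> D \<Longrightarrow> d = c [^] e d" by metis
  define N where "N = Suc (\<Sum>d \<in> D. nat \<bar>e d\<bar>)"
  have "d \<notin> generate G {c [^] N}" if d: "d \<in> D" for d
  proof
    assume "d \<in> generate G {c [^] N}"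
    then obtain w :: int where "d = (c [^] N) [^] w"
      using generate_pow[of "c [^] N"] c by auto
    also have "\<dots> = c [^] (int N * w)"
      using c by (simp add: int_pow_int[symmetric] int_pow_pow)
    finally have "c [^] e d = c [^] (int N * w)" using e[OF d] by simp
    then have eq: "e d = int N * w" using int_pow_eq[OF c] True by simp
    have "e d \<noteq> 0" using e[OF d] D(3) d by force
    then have "1 \<le> \<bar>w\<bar>" using eq by (auto simp: zero_less_abs_iff[symmetric] simp del: zero_less_abs_iff)
    then have "int N \<le> \<bar>e d\<bar>" using mult_left_mono[of 1 "\<bar>w\<bar>" "int N"] eq by (simp add: abs_mult)
    moreover have "nat \<bar>e d\<bar> \<le> (\<Sum>d \<in> D. nat \<bar>e d\<bar>)"
      using D(1) d by (intro member_le_sum) auto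
    ultimately show False unfolding N_def by linarith
  qed
  then show ?thesis unfolding N_def by blast
qed

lemma exists_power_subgroup_avoiding_conj_values:
  assumes K: "K \<lhd> G" "finite (rcosets K)" and c: "c \<in> carrier G"
    and \<rho>: "\<rho> \<in> hom (G\<lparr>carrier := K\<rparr>) (G\<lparr>carrier := generate G {c}\<rparr>)"
    and x: "x \<in> K" and e: "e \<in> generate G {c}"
    and avoid: "\<forall>g \<in> carrier G. \<rho> (inv g \<otimes> x \<otimes> g) \<noteq> e"
  shows "\<exists>N::nat. 0 < N \<and> (\<forall>g \<in> carrier G. \<rho> (inv g \<otimes> x \<otimes> g) \<otimes> inv e \<notin> generate G {c [^] N})"
proof -
  interpret K: normal K G by fact
  interpret C: subgroup "generate G {c}" G using c by (simp add: generate_is_subgroup)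
  have conj_C: "\<rho> (inv g \<otimes> x \<otimes> g) \<in> generate G {c}" if "g \<in> carrier G" for g
    using hom_subgroupsD(1)[OF K.subgroup_axioms C.subgroup_axioms \<rho>] K.inv_op_closed1 that x
    by blast
  define D where "D = (\<lambda>g. \<rho> (inv g \<otimes> x \<otimes> g) \<otimes> inv e) ` carrier G"
  have "D = (\<lambda>u. u \<otimes> inv e) ` (\<lambda>g. \<rho> (inv g \<otimes> x \<otimes> g)) ` carrier G"
    unfolding D_def by (simp add: image_image)
  then have "finite D"
    using finite_image_conj_hom_to_cyclic[OF K c \<rho> x] by simp
  moreover have "D \<subseteq> generate G {c}"
    unfolding D_def using conj_C e by auto
  moreover have "\<one> \<notin> D"
  proof
    assume "\<one> \<in> D"
    then obtain g where g: "g \<in> carrier G" "\<one> = \<rho> (inv g \<otimes> x \<otimes> g) \<otimes> inv e"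
      unfolding D_def by blast
    then have "\<rho> (inv g \<otimes> x \<otimes> g) = e"
      using conj_C e C.mem_carrier by (simp add: inv_solve_right)
    then show False using avoid g(1) by blast
  qed
  ultimately have "\<exists>N::nat. 0 < N \<and> (\<forall>d \<in> D. d \<notin> generate G {c [^] N})"
    by (rule exists_power_subgroup_avoiding[OF c])
  then show ?thesis unfolding D_def by blast
qed

lemma finite_index_subgroup_avoiding_conj:
  assumes K: "K \<lhd> G" "finite (rcosets K)" and c: "c \<in> K"
    and \<rho>: "\<rho> \<in> hom (G\<lparr>carrier := K\<rparr>) (G\<lparr>carrier := generate G {c}\<rparr>)"
    and retract: "\<forall>y \<in> generate G {c}. \<rho> y = y"
    and x: "x \<in> K" and e: "e \<in> generate G {c}"
    and avoid: "\<forall>g \<in> carrier G. \<rho> (inv g \<otimes> x \<otimes> g) \<noteq> e"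
  shows "\<exists>L. subgroup L G \<and> finite (rcosets L) \<and> (\<forall>g \<in> carrier G. (inv g \<otimes> x \<otimes> g) \<otimes> inv e \<notin> L)"
proof -
  interpret K: normal K G by fact
  have cc: "c \<in> carrier G" using c by (rule K.mem_carrier)
  interpret C: subgroup "generate G {c}" G using cc by (simp add: generate_is_subgroup)
  have CK: "generate G {c} \<subseteq> K" using c by (simp add: generate_subgroup_incl K.subgroup_axioms)
  note \<rho>_props = hom_subgroupsD[OF K.subgroup_axioms C.subgroup_axioms \<rho>]
  obtain N :: nat where N: "0 < N"
    "\<forall>g \<in> carrier G. \<rho> (inv g \<otimes> x \<otimes> g) \<otimes> inv e \<notin> generate G {c [^] N}"
    using exists_power_subgroup_avoiding_conj_values[OF K cc \<rho> x e avoid] by blast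
  define L where "L = {k \<in> K. \<rho> k \<in> generate G {c [^] N}}"
  have "subgroup (generate G {c [^] N}) G"
    using cc by (simp add: generate_is_subgroup)
  then have "subgroup L G" "finite (rcosets L)"
    unfolding L_def
    using subgroup_hom_vimage[OF K.subgroup_axioms C.subgroup_axioms \<rho>]
      finite_rcosets_hom_vimage[OF K.subgroup_axioms K(2) C.subgroup_axioms \<rho> _
        finite_rcosets_power_in_cyclic[OF cc N(1)]]
    by auto
  moreover have "(inv g \<otimes> x \<otimes> g) \<otimes> inv e \<notin> L" if g: "g \<in> carrier G" for g
  proof -
    have "\<rho> ((inv g \<otimes> x \<otimes> g) \<otimes> inv e) = \<rho> (inv g \<otimes> x \<otimes> g) \<otimes> inv e"
      using \<rho>_props(2,3) K.inv_op_closed1[OF g x] e CK retract by auto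
    then show ?thesis using N(2) g unfolding L_def by auto
  qed
  ultimately show ?thesis by blast
qed

end

theorem lemma2p1:
  fixes G :: "('a, 'b) monoid_scheme" and K :: "'a set" and a b :: 'a and \<rho> :: "'a \<Rightarrow> 'a"
  assumes "group G"
    and "a \<in> carrier G" and "b \<in> carrier G"
    and "K \<lhd> G"
    and "finite (rcosets\<^bsub>G\<^esub> K)"
    and "\<rho> \<in> hom (G\<lparr>carrier := K\<rparr>)
                  (G\<lparr>carrier := generate G {a [^]\<^bsub>G\<^esub> deg_in G K a}\<rparr>)"
    and "\<forall>x \<in> generate G {a [^]\<^bsub>G\<^esub> deg_in G K a}. \<rho> x = x"
    and "\<forall>g \<in> carrier G.
           \<rho> (inv\<^bsub>G\<^esub> g \<otimes>\<^bsub>G\<^esub> (b [^]\<^bsub>G\<^esub> (deg_in G K a * deg_in G K b)) \<otimes>\<^bsub>G\<^esub> g)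
             \<noteq> a [^]\<^bsub>G\<^esub> (deg_in G K a * deg_in G K b)"
  shows "\<exists>(H :: 'a set monoid) \<tau>. group H \<and> finite (carrier H) \<and> \<tau> \<in> hom G H \<and>
           \<not> (\<exists>h \<in> carrier H. inv\<^bsub>H\<^esub> h \<otimes>\<^bsub>H\<^esub> \<tau> a \<otimes>\<^bsub>H\<^esub> h = \<tau> b)"
proof -
  interpret G: group G by fact
  define m n where "m = deg_in G K a" and "n = deg_in G K b"
  define x e where "x = b [^]\<^bsub>G\<^esub> (m * n)" and "e = a [^]\<^bsub>G\<^esub> (m * n)"
  have Ka: "a [^]\<^bsub>G\<^esub> m \<in> K" and Kb: "b [^]\<^bsub>G\<^esub> n \<in> K"
    unfolding m_def n_def using G.pow_deg_in_mem assms(2-5) by blast+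
  have "x \<in> K"
    using G.subgroup_nat_pow_closed[OF normal_imp_subgroup[OF assms(4)] Kb, of m] assms(3)
    unfolding x_def by (simp add: G.nat_pow_pow mult.commute)
  moreover have "e \<in> generate G {a [^]\<^bsub>G\<^esub> m}"
    using G.subgroup_nat_pow_closed[OF G.generate_is_subgroup generate.incl, of "{a [^]\<^bsub>G\<^esub> m}" _ n]
      assms(2)
    unfolding e_def by (simp add: G.nat_pow_pow)
  ultimately obtain L where L: "subgroup L G" "finite (rcosets\<^bsub>G\<^esub> L)"
    "\<forall>g \<in> carrier G. (inv\<^bsub>G\<^esub> g \<otimes>\<^bsub>G\<^esub> x \<otimes>\<^bsub>G\<^esub> g) \<otimes>\<^bsub>G\<^esub> inv\<^bsub>G\<^esub> e \<notin> L"
    using G.finite_index_subgroup_avoiding_conj[OF assms(4,5) Ka] assms(6-8)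
    unfolding m_def n_def x_def e_def by blast
  obtain H :: "'a set monoid" and \<tau> where H: "group H" "finite (carrier H)" "\<tau> \<in> hom G H"
    and not_conj: "\<not> (\<exists>h \<in> carrier H. inv\<^bsub>H\<^esub> h \<otimes>\<^bsub>H\<^esub> \<tau> e \<otimes>\<^bsub>H\<^esub> h = \<tau> x)"
    using G.finite_quotient_separating_conj[OF L(1,2) _ _ L(3)] assms(2,3)
    unfolding x_def e_def by auto
  interpret \<tau>: group_hom G H \<tau>
    using H by (simp add: group_hom_def group_hom_axioms_def G.group_axioms)
  have "\<not> (\<exists>h \<in> carrier H. inv\<^bsub>H\<^esub> h \<otimes>\<^bsub>H\<^esub> \<tau> a \<otimes>\<^bsub>H\<^esub> h = \<tau> b)"
  proof
    assume "\<exists>h \<in> carrier H. inv\<^bsub>H\<^esub> h \<otimes>\<^bsub>H\<^esub> \<tau> a \<otimes>\<^bsub>H\<^esub> h = \<tau> b"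
    then obtain h where h: "h \<in> carrier H" "inv\<^bsub>H\<^esub> h \<otimes>\<^bsub>H\<^esub> \<tau> a \<otimes>\<^bsub>H\<^esub> h = \<tau> b" by blast
    then have "inv\<^bsub>H\<^esub> h \<otimes>\<^bsub>H\<^esub> \<tau> e \<otimes>\<^bsub>H\<^esub> h = \<tau> x"
      using \<tau>.H.conj_nat_pow[OF h(1), of "\<tau> a"] assms(2,3)
      unfolding x_def e_def by (simp add: \<tau>.hom_nat_pow)
    then show False using not_conj h(1) by blast
  qed
  then show ?thesis using H by blast
qed

end
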